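(* Fix an integer $k\ge1$ and let $\Delta_k:=\log(1/2)/\log(1-2^{-k})$. Fix $\Delta>0$, and for $n\ge k$ let $m=\lfloor\Delta n\rfloor$ and $V=(V_1,\dots,V_m)\sim\mathbf{P}_{\text{unif}}$. As $n\to\infty$: (i) if $\Delta<\Delta_k$, then $\mathbf{P}_{\text{unif}}(V\in\mathsf{FLAT})\to 1$; (ii) if $\Delta>\Delta_k$, then $\mathbf{P}_{\text{unif}}(V\in\mathsf{FLAT})\to 0$.
   Context: A $k$-flat of $\mathbb{F}_2^n$ is an affine subspace of dimension $n-k$; equivalently a set $\{x\in\mathbb{F}_2^n : \ell_i(x)=\varepsilon_i \ \forall i\in[k]\}$ where $\ell_1,\dots,\ell_k$ are linearly independent linear forms on $\mathbb{F}_2^n$ and $\varepsilon_1,\dots,\varepsilon_k\in\mathbb{F}_2$. Let $q_0$ be the uniform distribution on the set of all $k$-flats of $\mathbb{F}_2^n$, and $\mathbf{P}_{\text{unif}}:=q_0^{\otimes m}$ (i.e. $V_1,\dots,V_m$ i.i.d. uniform $k$-flats). For $V=(V_1,\dots,V_m)$, let $\mathcal{S}(V)=\mathbb{F}_2^n\setminus\bigcup_{j=1}^m V_j$ and $Z(V)=|\mathcal{S}(V)|$. $V$ is flat satisfiable, written $V\in\mathsf{FLAT}$, if $Z(V)\ge1$, i.e. $\bigcup_j V_j\neq\mathbb{F}_2^n$. *)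

theory Defs
  imports "HOL-Probability.Probability"
begin

text \<open>F_2^n is modelled as the set of boolean lists of length n (True = 1).\<close>
definition cube :: "nat \<Rightarrow> bool list set" where
  "cube n = {x. length x = n}"

definition lform :: "bool list \<Rightarrow> bool list \<Rightarrow> bool" where
  "lform a x = odd (card {i. i < length x \<and> i < length a \<and> a ! i \<and> x ! i})"

text \<open>Linear independence over F_2 of the forms lform (a 0), ..., lform (a (k-1)) on F_2^n:
  no nonempty subfamily sums to the zero form.\<close>
definition lin_indep_forms :: "nat \<Rightarrow> nat \<Rightarrow> (nat \<Rightarrow> bool list) \<Rightarrow> bool" where
  "lin_indep_forms n k a \<longleftrightarrow>
     (\<forall>S. S \<subseteq> {..<k} \<and> S \<noteq> {} \<longrightarrow>
        (\<exists>x\<in>cube n. odd (card {i\<in>S. lform (a i) x})))"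

definition kflats :: "nat \<Rightarrow> nat \<Rightarrow> bool list set set" where
  "kflats n k = {F. \<exists>a \<epsilon>. (\<forall>i<k. length (a i) = n) \<and> lin_indep_forms n k a \<and>
        F = {x\<in>cube n. \<forall>i<k. lform (a i) x = \<epsilon> i}}"

definition FLAT :: "nat \<Rightarrow> nat \<Rightarrow> (nat \<Rightarrow> bool list set) \<Rightarrow> bool" where
  "FLAT n m V \<longleftrightarrow> cube n - (\<Union>j<m. V j) \<noteq> {}"

definition P_unif :: "nat \<Rightarrow> nat \<Rightarrow> nat \<Rightarrow> (nat \<Rightarrow> bool list set) pmf" where
  "P_unif n k m = Pi_pmf {..<m} {} (\<lambda>_. pmf_of_set (kflats n k))"

definition Delta_k :: "nat \<Rightarrow> real" where
  "Delta_k k = ln (1/2) / ln (1 - 2 powr (- real k))"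

end

theory Submission
  imports Defs
begin

text \<open>
  Let Z(V) be the number of points of F_2^n covered by none of the flats V_1, ..., V_m.
  Translations and transvections preserve the set of k-flats and act transitively on points
  and on pairs of distinct points, so by double counting a uniform k-flat contains a given
  point with probability 2^-k and two given distinct points with probability at most 2^-2k.
  By independence, E Z = 2^n (1 - 2^-k)^m =: \<mu> and E Z^2 \<le> \<mu> + \<mu>^2, so Markov's inequality
  gives P(Z \<noteq> 0) \<le> \<mu> and Chebyshev's inequality gives P(Z = 0) \<le> 1/\<mu>. For m = \<lfloor>\<Delta> n\<rfloor>
  we have \<mu> = exp (n (ln 2 + \<Delta> ln (1 - 2^-k)) + O(1)), which tends to \<infinity> for \<Delta> < \<Delta>_k
  and to 0 for \<Delta> > \<Delta>_k.
\<close>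

section \<open>Arithmetic in F_2^n\<close>

definition vadd :: "bool list \<Rightarrow> bool list \<Rightarrow> bool list" where
  "vadd x y = map2 (\<noteq>) x y"

lemma length_vadd [simp]: "length (vadd x y) = min (length x) (length y)"
  by (simp add: vadd_def)

lemma nth_vadd [simp]: "i < length x \<Longrightarrow> i < length y \<Longrightarrow> vadd x y ! i = (x ! i \<noteq> y ! i)"
  by (simp add: vadd_def)

lemma vadd_in_cube: "x \<in> cube n \<Longrightarrow> y \<in> cube n \<Longrightarrow> vadd x y \<in> cube n"
  by (simp add: cube_def)

lemma vadd_vadd_cancel_right: "x \<in> cube n \<Longrightarrow> y \<in> cube n \<Longrightarrow> vadd (vadd x y) y = x"
  by (auto simp: cube_def intro!: nth_equalityI)

lemma vadd_vadd_cancel_left: "x \<in> cube n \<Longrightarrow> y \<in> cube n \<Longrightarrow> vadd x (vadd x y) = y"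
  by (auto simp: cube_def intro!: nth_equalityI)

lemma vadd_self: "x \<in> cube n \<Longrightarrow> vadd x x = replicate n False"
  by (auto simp: cube_def intro!: nth_equalityI)

lemma vadd_eq_zero_iff:
  assumes "x \<in> cube n" "y \<in> cube n"
  shows "vadd x y = replicate n False \<longleftrightarrow> x = y"
proof
  assume "vadd x y = replicate n False"
  then have "x ! i = y ! i" if "i < n" for i
    using that assms nth_vadd[of i x y] by (simp add: cube_def)
  then show "x = y"
    using assms by (auto simp: cube_def intro: nth_equalityI)
qed (use assms in \<open>simp add: vadd_self\<close>)

lemma finite_cube: "finite (cube n)"
  unfolding cube_def using finite_lists_length_eq[of "UNIV :: bool set" n] by simp

lemma card_cube: "card (cube n) = 2 ^ n"
  unfolding cube_def using card_lists_length_eq[of "UNIV :: bool set" n] by simp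

lemma zero_in_cube: "replicate n False \<in> cube n"
  by (simp add: cube_def)

lemma odd_card_filter_xor:
  assumes "finite U"
  shows "odd (card {i\<in>U. P i \<noteq> Q i}) \<longleftrightarrow> odd (card {i\<in>U. P i}) \<noteq> odd (card {i\<in>U. Q i})"
  using assms
proof (induction rule: finite_induct)
  case (insert a U)
  have split: "{i\<in>insert a U. R i} = (if R a then insert a {i\<in>U. R i} else {i\<in>U. R i})" for R
    by auto
  have "card (insert a {i\<in>U. R i}) = Suc (card {i\<in>U. R i})" for R
    using insert by (subst card_insert_disjoint) auto
  then show ?case
    unfolding split using insert.IH by auto
qed simp

lemma lform_commute: "lform a x = lform x a"
  unfolding lform_def by (rule arg_cong[where f = "\<lambda>S. odd (card S)"]) auto

lemma lform_vadd:
  assumes "length x = n" "length y = n"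
  shows "lform a (vadd x y) \<longleftrightarrow> lform a x \<noteq> lform a y"
proof -
  let ?I = "{i. i < n \<and> i < length a \<and> a ! i}"
  have "lform a z = odd (card {i\<in>?I. z ! i})" if "length z = n" for z
    unfolding lform_def by (intro arg_cong[where f = "\<lambda>S. odd (card S)"]) (use that in auto)
  moreover have "lform a (vadd x y) = odd (card {i\<in>?I. x ! i \<noteq> y ! i})"
    unfolding lform_def by (intro arg_cong[where f = "\<lambda>S. odd (card S)"]) (use assms in auto)
  ultimately show ?thesis
    using assms odd_card_filter_xor[of ?I] by simp
qed

lemma lform_vadd_left:
  "length a = n \<Longrightarrow> length b = n \<Longrightarrow> lform (vadd a b) x \<longleftrightarrow> lform a x \<noteq> lform b x"
  using lform_vadd[of a n b x] by (simp add: lform_commute)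

lemma lform_zero [simp]: "\<not> lform a (replicate n False)"
proof -
  have "{i. i < n \<and> i < length a \<and> a ! i \<and> replicate n False ! i} = {}"
    by auto
  then show ?thesis
    unfolding lform_def length_replicate by (simp only:) simp
qed

definition unit_vec :: "nat \<Rightarrow> nat \<Rightarrow> bool list" where
  "unit_vec n j = map (\<lambda>i. i = j) [0..<n]"

lemma unit_vec_in_cube: "unit_vec n j \<in> cube n"
  by (simp add: unit_vec_def cube_def)

lemma length_unit_vec [simp]: "length (unit_vec n j) = n"
  by (simp add: unit_vec_def)

lemma nth_unit_vec [simp]: "i < n \<Longrightarrow> unit_vec n j ! i \<longleftrightarrow> i = j"
  by (simp add: unit_vec_def)

lemma lform_unit_vec:
  assumes "x \<in> cube n" "j < n"
  shows "lform (unit_vec n j) x = x ! j"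
proof -
  have "{i. i < length x \<and> i < length (unit_vec n j) \<and> unit_vec n j ! i \<and> x ! i} = (if x ! j then {j} else {})"
    using assms by (auto simp: cube_def)
  then show ?thesis
    unfolding lform_def by simp
qed

lemma nonzero_vec_nth:
  assumes "d \<in> cube n" "d \<noteq> replicate n False"
  obtains j where "j < n" "d ! j"
proof -
  have "\<exists>j<n. d ! j"
  proof (rule ccontr)
    assume "\<not> (\<exists>j<n. d ! j)"
    then have "d = replicate n False"
      using assms(1) by (auto simp: cube_def intro!: nth_equalityI)
    with assms(2) show False ..
  qed
  then show ?thesis
    using that by blast
qed

text \<open>Any two nonzero vectors are both moved by a common linear form; this is what
  makes the transvections below act transitively on nonzero vectors.\<close>
lemma ex_lform_nonzero_on_both:
  assumes d: "d \<in> cube n" "d \<noteq> replicate n False" and e: "e \<in> cube n" "e \<noteq> replicate n False"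
  shows "\<exists>c\<in>cube n. lform c d \<and> lform c e"
proof -
  obtain j where j: "j < n" "d ! j" using nonzero_vec_nth[OF d] .
  obtain j' where j': "j' < n" "e ! j'" using nonzero_vec_nth[OF e] .
  consider "d ! j'" | "e ! j" | "\<not> d ! j'" "\<not> e ! j"
    by blast
  then show ?thesis
  proof cases
    case 1
    then show ?thesis
      using j' d e by (intro bexI[of _ "unit_vec n j'"]) (auto simp: lform_unit_vec unit_vec_in_cube)
  next
    case 2
    then show ?thesis
      using j d e by (intro bexI[of _ "unit_vec n j"]) (auto simp: lform_unit_vec unit_vec_in_cube)
  next
    case 3
    have "lform (vadd (unit_vec n j) (unit_vec n j')) x \<longleftrightarrow> x ! j \<noteq> x ! j'" if "x \<in> cube n" for x
      using that j j' lform_vadd_left[of "unit_vec n j" n "unit_vec n j'" x]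
      by (simp add: lform_unit_vec)
    then show ?thesis
      using 3 j j' d e by (intro bexI[of _ "vadd (unit_vec n j) (unit_vec n j')"])
        (auto simp: vadd_in_cube unit_vec_in_cube)
  qed
qed

section \<open>The number of points of a flat\<close>

definition sgn_bool :: "bool \<Rightarrow> real" where
  "sgn_bool b = (if b then -1 else 1)"

lemma prod_of_bool:
  "finite A \<Longrightarrow> (\<Prod>i\<in>A. of_bool (P i)) = (of_bool (\<forall>i\<in>A. P i) :: 'a::comm_semiring_1)"
  by (induction rule: finite_induct) auto

lemma prod_sgn_bool:
  "finite S \<Longrightarrow> (\<Prod>i\<in>S. sgn_bool (b i)) = sgn_bool (odd (card {i\<in>S. b i}))"
proof (induction rule: finite_induct)
  case (insert a S)
  have "{i\<in>insert a S. b i} = (if b a then insert a {i\<in>S. b i} else {i\<in>S. b i})"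
    by auto
  moreover have "card (insert a {i\<in>S. b i}) = Suc (card {i\<in>S. b i})"
    using insert by (subst card_insert_disjoint) auto
  ultimately show ?case
    using insert by (simp add: sgn_bool_def)
qed (simp add: sgn_bool_def)

lemma sum_sgn_bool_additive_nonzero:
  assumes additive: "\<And>x y. x \<in> cube n \<Longrightarrow> y \<in> cube n \<Longrightarrow> f (vadd x y) \<longleftrightarrow> f x \<noteq> f y"
    and x0: "x0 \<in> cube n" "f x0"
  shows "(\<Sum>x\<in>cube n. sgn_bool (f x)) = 0"
proof -
  have "(\<Sum>x\<in>cube n. sgn_bool (f x)) = (\<Sum>x\<in>cube n. sgn_bool (f (vadd x x0)))"
    by (rule sum.reindex_bij_witness[where i = "\<lambda>x. vadd x x0" and j = "\<lambda>x. vadd x x0"])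
       (auto simp: vadd_vadd_cancel_right vadd_in_cube x0)
  also have "\<dots> = (\<Sum>x\<in>cube n. - sgn_bool (f x))"
    by (rule sum.cong) (auto simp: additive x0 sgn_bool_def)
  finally show ?thesis
    by (simp add: sum_negf)
qed

lemma sum_prod_sgn_bool_indep_forms:
  assumes lens: "\<forall>i<k. length (a i) = n" and indep: "lin_indep_forms n k a" and S: "S \<subseteq> {..<k}"
  shows "(\<Sum>x\<in>cube n. \<Prod>i\<in>S. sgn_bool (lform (a i) x)) = (if S = {} then 2 ^ n else 0)"
proof (cases "S = {}")
  case True
  then show ?thesis
    by (simp add: card_cube)
next
  case False
  have fS: "finite S"
    using S finite_subset by blast
  have "odd (card {i\<in>S. lform (a i) (vadd x y)}) \<longleftrightarrow>
        odd (card {i\<in>S. lform (a i) x}) \<noteq> odd (card {i\<in>S. lform (a i) y})"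
    if "x \<in> cube n" "y \<in> cube n" for x y
    using that odd_card_filter_xor[OF fS] by (simp add: cube_def lform_vadd)
  moreover obtain x0 where "x0 \<in> cube n" "odd (card {i\<in>S. lform (a i) x0})"
    using indep False S unfolding lin_indep_forms_def by auto
  ultimately show ?thesis
    using False by (simp add: prod_sgn_bool[OF fS] sum_sgn_bool_additive_nonzero)
qed

text \<open>Fourier expansion: the indicator of the flat is
  2^-k \<Sum>_{S \<subseteq> [k]} \<Prod>_{i \<in> S} (-1)^(l_i(x) + \<epsilon>_i), and by independence
  only the term S = {} survives summation over x.\<close>
lemma card_flat:
  assumes lens: "\<forall>i<k. length (a i) = n" and indep: "lin_indep_forms n k a"
  shows "card {x\<in>cube n. \<forall>i<k. lform (a i) x = \<epsilon> i} * 2 ^ k = 2 ^ n"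
proof -
  define t where "t x i = sgn_bool (lform (a i) x) * sgn_bool (\<epsilon> i)" for x i
  have "real (card {x\<in>cube n. \<forall>i<k. lform (a i) x = \<epsilon> i})
      = (\<Sum>x\<in>cube n. of_bool (\<forall>i\<in>{..<k}. lform (a i) x = \<epsilon> i))"
    by (simp add: finite_cube Int_def Ball_def)
  also have "\<dots> = (\<Sum>x\<in>cube n. \<Prod>i<k. (t x i + 1) / 2)"
  proof (intro sum.cong refl)
    fix x
    have "of_bool (\<forall>i\<in>{..<k}. lform (a i) x = \<epsilon> i) = (\<Prod>i<k. of_bool (lform (a i) x = \<epsilon> i) :: real)"
      by (rule prod_of_bool[symmetric]) simp
    also have "\<dots> = (\<Prod>i<k. (t x i + 1) / 2)"
      by (intro prod.cong refl) (simp add: t_def sgn_bool_def)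
    finally show "of_bool (\<forall>i\<in>{..<k}. lform (a i) x = \<epsilon> i) = (\<Prod>i<k. (t x i + 1) / 2)" .
  qed
  also have "\<dots> = (\<Sum>x\<in>cube n. \<Sum>S\<in>Pow {..<k}. \<Prod>i\<in>S. t x i) / 2 ^ k"
    by (simp add: prod_dividef prod_add sum_divide_distrib)
  also have "\<dots> = (\<Sum>S\<in>Pow {..<k}. \<Sum>x\<in>cube n. \<Prod>i\<in>S. t x i) / 2 ^ k"
    by (subst sum.swap) (rule refl)
  also have "\<dots> = (\<Sum>S\<in>Pow {..<k}. if S = {} then 2 ^ n else 0) / 2 ^ k"
  proof (intro arg_cong[where f = "\<lambda>s. s / 2 ^ k"] sum.cong refl)
    fix S assume "S \<in> Pow {..<k}"
    moreover have "(\<Sum>x\<in>cube n. \<Prod>i\<in>S. t x i)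
        = (\<Prod>i\<in>S. sgn_bool (\<epsilon> i)) * (\<Sum>x\<in>cube n. \<Prod>i\<in>S. sgn_bool (lform (a i) x))"
      by (simp add: t_def prod.distrib sum_distrib_left mult.commute)
    ultimately show "(\<Sum>x\<in>cube n. \<Prod>i\<in>S. t x i) = (if S = {} then 2 ^ n else 0)"
      by (simp add: sum_prod_sgn_bool_indep_forms[OF lens indep])
  qed
  finally have "real (card {x\<in>cube n. \<forall>i<k. lform (a i) x = \<epsilon> i} * 2 ^ k) = real (2 ^ n)"
    by (simp add: sum.delta')
  then show ?thesis
    by (rule of_nat_eq_iff[THEN iffD1])
qed

lemma finite_kflats: "finite (kflats n k)"
  by (rule finite_subset[of _ "Pow (cube n)"]) (auto simp: kflats_def finite_cube)

lemma kflat_subset_cube: "F \<in> kflats n k \<Longrightarrow> F \<subseteq> cube n"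
  unfolding kflats_def by auto

lemma card_kflat: "F \<in> kflats n k \<Longrightarrow> card F * 2 ^ k = 2 ^ n"
  unfolding kflats_def using card_flat by auto

lemma card_kflat_eq:
  assumes "F \<in> kflats n k" "k \<le> n"
  shows "card F = 2 ^ (n - k)"
proof -
  have "card F * 2 ^ k = 2 ^ (n - k) * 2 ^ k"
    using card_kflat[OF assms(1)] assms(2) by (simp flip: power_add)
  then show ?thesis
    by simp
qed

lemma kflats_nonempty:
  assumes "k \<le> n"
  shows "kflats n k \<noteq> {}"
proof -
  have "lform (unit_vec n i) (unit_vec n j) \<longleftrightarrow> i = j" if "j < n" for i j
    using that by (subst lform_commute) (auto simp: lform_unit_vec unit_vec_in_cube)
  then have singleton: "{i\<in>S. lform (unit_vec n i) (unit_vec n j)} = {j}"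
    if "S \<subseteq> {..<k}" "j \<in> S" for S j
    using that assms by auto
  have "lin_indep_forms n k (unit_vec n)"
    unfolding lin_indep_forms_def
  proof (intro allI impI)
    fix S assume S: "S \<subseteq> {..<k} \<and> S \<noteq> {}"
    then obtain j where "j \<in> S"
      by auto
    then show "\<exists>x\<in>cube n. odd (card {i\<in>S. lform (unit_vec n i) x})"
      using S singleton unit_vec_in_cube by (intro bexI[of _ "unit_vec n j"]) auto
  qed
  moreover have "\<forall>i<k. length (unit_vec n i) = n"
    by simp
  ultimately have "{x\<in>cube n. \<forall>i<k. lform (unit_vec n i) x = False} \<in> kflats n k"
    unfolding kflats_def mem_Collect_eq
    by (intro exI[of _ "unit_vec n"] exI[of _ "\<lambda>_. False"] conjI refl)
  then show ?thesis
    by auto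
qed

section \<open>Affine symmetries of the set of k-flats\<close>

lemma involution_image_in_kflats:
  assumes in_cube: "\<And>x. x \<in> cube n \<Longrightarrow> \<sigma> x \<in> cube n"
    and involution: "\<And>x. x \<in> cube n \<Longrightarrow> \<sigma> (\<sigma> x) = x"
    and length_dual: "\<And>a. length a = n \<Longrightarrow> length (B a) = n"
    and dual: "\<And>a x. length a = n \<Longrightarrow> x \<in> cube n \<Longrightarrow> lform a (\<sigma> x) \<longleftrightarrow> lform (B a) x \<noteq> C a"
    and indep_dual: "\<And>a. \<forall>i<k. length (a i) = n \<Longrightarrow> lin_indep_forms n k a \<Longrightarrow>
                        lin_indep_forms n k (\<lambda>i. B (a i))"
    and F: "F \<in> kflats n k"
  shows "\<sigma> ` F \<in> kflats n k"
proof -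
  obtain a \<epsilon> where lens: "\<forall>i<k. length (a i) = n" and indep: "lin_indep_forms n k a"
    and F_eq: "F = {x\<in>cube n. \<forall>i<k. lform (a i) x = \<epsilon> i}"
    using F unfolding kflats_def by auto
  have "\<sigma> ` F = {y\<in>cube n. \<forall>i<k. lform (B (a i)) y = (\<epsilon> i \<noteq> C (a i))}"
  proof (intro equalityI subsetI)
    fix y assume "y \<in> \<sigma> ` F"
    then obtain x where x: "x \<in> cube n" "\<forall>i<k. lform (a i) x = \<epsilon> i" and y: "y = \<sigma> x"
      unfolding F_eq by auto
    then show "y \<in> {y\<in>cube n. \<forall>i<k. lform (B (a i)) y = (\<epsilon> i \<noteq> C (a i))}"
      using dual[of "a _" y] lens in_cube involution by auto
  next
    fix y assume y: "y \<in> {y\<in>cube n. \<forall>i<k. lform (B (a i)) y = (\<epsilon> i \<noteq> C (a i))}"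
    then have "\<sigma> y \<in> F"
      unfolding F_eq using dual[of "a _" y] lens in_cube by auto
    then show "y \<in> \<sigma> ` F"
      using y involution by (metis (no_types, lifting) image_eqI mem_Collect_eq)
  qed
  moreover have "\<forall>i<k. length (B (a i)) = n"
    using lens length_dual by auto
  ultimately show ?thesis
    unfolding kflats_def mem_Collect_eq using indep_dual[OF lens indep]
    by (intro exI[of _ "\<lambda>i. B (a i)"] exI[of _ "\<lambda>i. \<epsilon> i \<noteq> C (a i)"] conjI)
qed

lemma card_kflats_superset_involution:
  assumes involution: "\<And>x. x \<in> cube n \<Longrightarrow> \<sigma> (\<sigma> x) = x"
    and image: "\<And>F. F \<in> kflats n k \<Longrightarrow> \<sigma> ` F \<in> kflats n k"
    and X: "X \<subseteq> cube n"
  shows "card {F\<in>kflats n k. X \<subseteq> F} = card {F\<in>kflats n k. \<sigma> ` X \<subseteq> F}"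
proof (rule bij_betw_same_card[of "image \<sigma>"], rule bij_betw_byWitness[where f' = "image \<sigma>"])
  have image_image_id: "\<sigma> ` \<sigma> ` Y = Y" if "Y \<subseteq> cube n" for Y
  proof -
    have "\<sigma> ` \<sigma> ` Y = id ` Y"
      unfolding image_image by (rule image_cong) (use that involution in auto)
    then show ?thesis
      by simp
  qed
  show "\<forall>F\<in>{F\<in>kflats n k. X \<subseteq> F}. \<sigma> ` \<sigma> ` F = F"
       "\<forall>F\<in>{F\<in>kflats n k. \<sigma> ` X \<subseteq> F}. \<sigma> ` \<sigma> ` F = F"
    using image_image_id[OF kflat_subset_cube] by blast+
  show "image \<sigma> ` {F\<in>kflats n k. X \<subseteq> F} \<subseteq> {F\<in>kflats n k. \<sigma> ` X \<subseteq> F}"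
    using image by (auto simp: image_mono)
  show "image \<sigma> ` {F\<in>kflats n k. \<sigma> ` X \<subseteq> F} \<subseteq> {F\<in>kflats n k. X \<subseteq> F}"
  proof (rule image_subsetI)
    fix F assume F: "F \<in> {F\<in>kflats n k. \<sigma> ` X \<subseteq> F}"
    then have "X \<subseteq> \<sigma> ` F"
      using image_image_id[OF X] image_mono[of "\<sigma> ` X" F \<sigma>] by simp
    then show "\<sigma> ` F \<in> {F\<in>kflats n k. X \<subseteq> F}"
      using F image by simp
  qed
qed

lemma translate_image_in_kflats:
  assumes "t \<in> cube n" "F \<in> kflats n k"
  shows "(\<lambda>x. vadd x t) ` F \<in> kflats n k"
  by (rule involution_image_in_kflats[where B = id and C = "\<lambda>a. lform a t"])
     (use assms in \<open>auto simp: vadd_in_cube vadd_vadd_cancel_right lform_vadd cube_def\<close>)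

lemma card_kflats_superset_translate:
  assumes "t \<in> cube n" "X \<subseteq> cube n"
  shows "card {F\<in>kflats n k. X \<subseteq> F} = card {F\<in>kflats n k. (\<lambda>x. vadd x t) ` X \<subseteq> F}"
  by (rule card_kflats_superset_involution)
     (use assms in \<open>auto simp: vadd_vadd_cancel_right translate_image_in_kflats\<close>)

definition transvection :: "bool list \<Rightarrow> bool list \<Rightarrow> bool list \<Rightarrow> bool list" where
  "transvection c d x = (if lform c x then vadd x d else x)"

lemma transvection_in_cube: "x \<in> cube n \<Longrightarrow> d \<in> cube n \<Longrightarrow> transvection c d x \<in> cube n"
  by (simp add: transvection_def vadd_in_cube)

lemma transvection_transvection:
  assumes "x \<in> cube n" "d \<in> cube n" "\<not> lform c d"
  shows "transvection c d (transvection c d x) = x"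
  using assms by (simp add: transvection_def lform_vadd vadd_vadd_cancel_right cube_def)

lemma lform_transvection:
  assumes "length a = n" "c \<in> cube n" "d \<in> cube n" "x \<in> cube n"
  shows "lform a (transvection c d x) \<longleftrightarrow> lform (transvection d c a) x"
  using assms by (auto simp: transvection_def lform_vadd lform_vadd_left lform_commute[of d] cube_def)

lemma transvection_image_in_kflats:
  assumes c: "c \<in> cube n" and d: "d \<in> cube n" and cd: "\<not> lform c d" and F: "F \<in> kflats n k"
  shows "transvection c d ` F \<in> kflats n k"
proof (rule involution_image_in_kflats[where B = "transvection d c" and C = "\<lambda>_. False"])
  fix a assume lens: "\<forall>i<k. length (a i) = n" and indep: "lin_indep_forms n k a"
  show "lin_indep_forms n k (\<lambda>i. transvection d c (a i))"
    unfolding lin_indep_forms_def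
  proof (intro allI impI)
    fix S assume S: "S \<subseteq> {..<k} \<and> S \<noteq> {}"
    then obtain x0 where x0: "x0 \<in> cube n" "odd (card {i\<in>S. lform (a i) x0})"
      using indep unfolding lin_indep_forms_def by blast
    have "lform (transvection d c (a i)) (transvection c d x0) = lform (a i) x0" if "i \<in> S" for i
      using that S lens x0 c d cd lform_transvection[of "a i" n c d "transvection c d x0"]
      by (auto simp: transvection_in_cube transvection_transvection)
    then have "{i\<in>S. lform (transvection d c (a i)) (transvection c d x0)} = {i\<in>S. lform (a i) x0}"
      by auto
    then show "\<exists>x\<in>cube n. odd (card {i\<in>S. lform (transvection d c (a i)) x})"
      using x0 c d by (intro bexI[of _ "transvection c d x0"]) (auto simp: transvection_in_cube)
  qed
next
  show "length (transvection d c a) = n" if "length a = n" for a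
    using transvection_in_cube[of a n c d] that c by (simp add: cube_def)
qed (use assms in \<open>auto simp: transvection_in_cube transvection_transvection lform_transvection\<close>)

lemma card_kflats_containing_zero_and_nonzero:
  assumes d: "d \<in> cube n" "d \<noteq> replicate n False" and e: "e \<in> cube n" "e \<noteq> replicate n False"
  shows "card {F\<in>kflats n k. {replicate n False, d} \<subseteq> F} = card {F\<in>kflats n k. {replicate n False, e} \<subseteq> F}"
proof -
  obtain c where c: "c \<in> cube n" "lform c d" "lform c e"
    using ex_lform_nonzero_on_both[OF d e] by blast
  define D where "D = vadd d e"
  have D: "D \<in> cube n" "\<not> lform c D"
    using c d e by (auto simp: D_def vadd_in_cube lform_vadd cube_def)
  have "transvection c D ` {replicate n False, d} = {replicate n False, e}"
    using c d e by (simp add: transvection_def D_def vadd_vadd_cancel_left)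
  then show ?thesis
    using card_kflats_superset_involution[of n "transvection c D" k "{replicate n False, d}"]
    using c D d by (simp add: transvection_transvection transvection_image_in_kflats zero_in_cube)
qed

lemma card_kflats_containing_point_eq:
  assumes "x \<in> cube n" "y \<in> cube n"
  shows "card {F\<in>kflats n k. x \<in> F} = card {F\<in>kflats n k. y \<in> F}"
  using card_kflats_superset_translate[of "vadd x y" n "{x}" k] assms
  by (simp add: vadd_in_cube vadd_vadd_cancel_left)

lemma card_kflats_containing_pair_eq:
  assumes "x \<in> cube n" "y \<in> cube n" "x \<noteq> y" "x' \<in> cube n" "y' \<in> cube n" "x' \<noteq> y'"
  shows "card {F\<in>kflats n k. x \<in> F \<and> y \<in> F} = card {F\<in>kflats n k. x' \<in> F \<and> y' \<in> F}"
proof -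
  have translate_to_zero: "card {F\<in>kflats n k. x \<in> F \<and> y \<in> F}
      = card {F\<in>kflats n k. {replicate n False, vadd y x} \<subseteq> F}"
    if "x \<in> cube n" "y \<in> cube n" for x y
    using card_kflats_superset_translate[of x n "{x, y}" k] that by (simp add: vadd_self)
  show ?thesis
    using assms card_kflats_containing_zero_and_nonzero[of "vadd y x" n "vadd y' x'"]
    by (simp add: translate_to_zero vadd_in_cube vadd_eq_zero_iff)
qed

section \<open>Incidences between points and k-flats\<close>

text \<open>Double counting point-flat incidences, every point lying in equally many flats.\<close>
lemma card_kflats_containing_point:
  assumes "x \<in> cube n"
  shows "card {F\<in>kflats n k. x \<in> F} * 2 ^ k = card (kflats n k)"
proof -
  define K where "K = kflats n k"
  have "2 ^ n * card {F\<in>K. x \<in> F} = (\<Sum>y\<in>cube n. card {F\<in>K. y \<in> F})"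
    using card_kflats_containing_point_eq[OF _ assms] by (simp add: K_def card_cube)
  also have "\<dots> = (\<Sum>F\<in>K. card F)"
  proof (intro sum_multicount_gen ballI)
    fix F assume "F \<in> K"
    then have "{y\<in>cube n. y \<in> F} = F"
      using kflat_subset_cube unfolding K_def by blast
    then show "card {y\<in>cube n. y \<in> F} = card F"
      by simp
  qed (simp_all add: K_def finite_cube finite_kflats)
  finally have "2 ^ n * card {F\<in>K. x \<in> F} * 2 ^ k = (\<Sum>F\<in>K. card F * 2 ^ k)"
    by (simp add: sum_distrib_right)
  also have "\<dots> = 2 ^ n * card K"
    by (simp add: K_def card_kflat)
  finally show ?thesis
    by (simp add: K_def)
qed

text \<open>Double counting the pairs (z, F) with z \<noteq> x and x, z \<in> F.\<close>
lemma card_kflats_containing_pair_mult: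
  assumes "k \<le> n" "x \<in> cube n" "y \<in> cube n" "x \<noteq> y"
  shows "(2 ^ n - 1) * card {F\<in>kflats n k. x \<in> F \<and> y \<in> F}
           = card {F\<in>kflats n k. x \<in> F} * (2 ^ (n - k) - 1)"
proof -
  define K where "K = kflats n k"
  have "(\<Sum>z\<in>cube n - {x}. card {F\<in>K. x \<in> F \<and> z \<in> F})
      = (\<Sum>z\<in>cube n - {x}. card {F\<in>K. x \<in> F \<and> y \<in> F})"
    unfolding K_def by (intro sum.cong refl card_kflats_containing_pair_eq) (use assms in auto)
  then have "(2 ^ n - 1) * card {F\<in>K. x \<in> F \<and> y \<in> F}
      = (\<Sum>z\<in>cube n - {x}. card {F\<in>K. x \<in> F \<and> z \<in> F})"
    using assms(2) by (simp add: card_cube card_Diff_singleton finite_cube)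
  also have "\<dots> = (\<Sum>F\<in>K. if x \<in> F then 2 ^ (n - k) - 1 else 0)"
  proof (intro sum_multicount_gen ballI)
    fix F assume F: "F \<in> K"
    then have "{z\<in>cube n - {x}. x \<in> F \<and> z \<in> F} = (if x \<in> F then F - {x} else {})"
      using kflat_subset_cube unfolding K_def by auto
    moreover have "finite F"
      using F kflat_subset_cube finite_cube finite_subset unfolding K_def by metis
    moreover have "card F = 2 ^ (n - k)"
      using F assms(1) card_kflat_eq unfolding K_def by blast
    ultimately show "card {z\<in>cube n - {x}. x \<in> F \<and> z \<in> F} = (if x \<in> F then 2 ^ (n - k) - 1 else 0)"
      by (simp add: card_Diff_singleton)
  qed (simp_all add: K_def finite_cube finite_kflats)
  also have "\<dots> = card {F\<in>K. x \<in> F} * (2 ^ (n - k) - 1)"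
    unfolding K_def by (simp add: sum.inter_filter[OF finite_kflats, symmetric])
  finally show ?thesis
    by (simp add: K_def)
qed

lemma card_kflats_containing_pair:
  assumes "k \<le> n" "x \<in> cube n" "y \<in> cube n" "x \<noteq> y"
  shows "card {F\<in>kflats n k. x \<in> F \<and> y \<in> F} * 4 ^ k \<le> card (kflats n k)"
proof -
  define p where "p = card {F\<in>kflats n k. x \<in> F}"
  define r where "r = card {F\<in>kflats n k. x \<in> F \<and> y \<in> F}"
  have "2 ^ (n - k) * 2 ^ k = (2::nat) ^ n"
    using assms(1) by (simp flip: power_add)
  have "(2 ^ n - 1) * (r * 2 ^ k) = p * (2 ^ (n - k) - 1) * 2 ^ k"
    unfolding p_def r_def by (simp only: mult.assoc[symmetric] card_kflats_containing_pair_mult[OF assms])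
  also have "\<dots> = p * (2 ^ n - 2 ^ k)"
    by (simp only: mult.assoc diff_mult_distrib mult_1 \<open>2 ^ (n - k) * 2 ^ k = 2 ^ n\<close>)
  also have "\<dots> \<le> p * (2 ^ n - 1)"
    by (intro mult_le_mono2 diff_le_mono2) simp
  finally have "(2 ^ n - 1) * (r * 2 ^ k) \<le> (2 ^ n - 1) * p"
    by (simp only: mult.commute[of p])
  moreover have "0 < (2::nat) ^ n - 1"
    using assms(2-4) one_less_power[of "2::nat" n] by (cases n) (auto simp: cube_def)
  ultimately have "r * 2 ^ k \<le> p"
    using mult_le_cancel1 by blast
  have "r * 4 ^ k = r * 2 ^ k * 2 ^ k"
    by (simp only: mult.assoc flip: power_mult_distrib) simp
  also have "\<dots> \<le> p * 2 ^ k"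
    using \<open>r * 2 ^ k \<le> p\<close> by (rule mult_le_mono1)
  also have "\<dots> = card (kflats n k)"
    using card_kflats_containing_point[OF assms(2)] by (simp add: p_def)
  finally show ?thesis
    by (simp add: r_def)
qed

lemma prob_kflat_contains:
  assumes "k \<le> n" "x \<in> cube n"
  shows "measure_pmf.prob (pmf_of_set (kflats n k)) {F. x \<in> F} = 1 / 2 ^ k"
proof -
  have "real (card {F\<in>kflats n k. x \<in> F} * 2 ^ k) = real (card (kflats n k))"
    by (simp only: card_kflats_containing_point[OF assms(2)])
  moreover have "0 < card (kflats n k)"
    using finite_kflats kflats_nonempty[OF assms(1)] by (simp add: card_gt_0_iff)
  ultimately show ?thesis
    using assms(1) by (simp add: measure_pmf_of_set finite_kflats kflats_nonempty Int_def field_simps)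
qed

lemma prob_kflat_contains_both_le:
  assumes "k \<le> n" "x \<in> cube n" "y \<in> cube n" "x \<noteq> y"
  shows "measure_pmf.prob (pmf_of_set (kflats n k)) {F. x \<in> F \<and> y \<in> F} \<le> 1 / 4 ^ k"
proof -
  have "real (card {F\<in>kflats n k. x \<in> F \<and> y \<in> F} * 4 ^ k) \<le> real (card (kflats n k))"
    using card_kflats_containing_pair[OF assms] by (simp only: of_nat_le_iff)
  moreover have "0 < card (kflats n k)"
    using finite_kflats kflats_nonempty[OF assms(1)] by (simp add: card_gt_0_iff)
  ultimately show ?thesis
    using assms(1) by (simp add: measure_pmf_of_set finite_kflats kflats_nonempty Int_def field_simps)
qed

lemma expectation_kflat_avoids:
  assumes "k \<le> n" "x \<in> cube n"
  shows "measure_pmf.expectation (pmf_of_set (kflats n k)) (\<lambda>F. of_bool (x \<notin> F) :: real) = 1 - 1 / 2 ^ k"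
proof -
  have "(\<lambda>F. of_bool (x \<notin> F) :: real) = indicator (UNIV - {F. x \<in> F})"
    by (auto simp: indicator_def)
  then show ?thesis
    using measure_pmf.prob_compl[of "{F. x \<in> F}" "pmf_of_set (kflats n k)"]
    by (simp add: prob_kflat_contains[OF assms])
qed

lemma expectation_kflat_avoids_both_le:
  assumes "k \<le> n" "x \<in> cube n" "y \<in> cube n" "x \<noteq> y"
  shows "measure_pmf.expectation (pmf_of_set (kflats n k)) (\<lambda>F. of_bool (x \<notin> F) * of_bool (y \<notin> F) :: real)
           \<le> (1 - 1 / 2 ^ k) ^ 2"
proof -
  let ?q = "pmf_of_set (kflats n k)"
  have "(\<lambda>F. of_bool (x \<notin> F) * of_bool (y \<notin> F) :: real) = indicator (UNIV - ({F. x \<in> F} \<union> {F. y \<in> F}))"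
    by (auto simp: indicator_def)
  then have "measure_pmf.expectation ?q (\<lambda>F. of_bool (x \<notin> F) * of_bool (y \<notin> F) :: real)
      = 1 - (measure_pmf.prob ?q {F. x \<in> F} + measure_pmf.prob ?q {F. y \<in> F}
              - measure_pmf.prob ?q {F. x \<in> F \<and> y \<in> F})"
    using measure_pmf.prob_compl[of "{F. x \<in> F} \<union> {F. y \<in> F}" ?q]
    by (simp add: measure_Un3 measure_pmf.fmeasurable_eq_sets Collect_conj_eq)
  also have "\<dots> \<le> 1 - (1 / 2 ^ k + 1 / 2 ^ k - 1 / 4 ^ k)"
    using prob_kflat_contains_both_le[OF assms] assms
    by (simp add: prob_kflat_contains)
  also have "\<dots> = (1 - 1 / 2 ^ k) ^ 2"
    by (simp add: power2_eq_square field_simps flip: power_mult_distrib)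
  finally show ?thesis .
qed

section \<open>First and second moment of the number of uncovered points\<close>

lemma (in prob_space) prob_eq_0_le_variance:
  fixes X :: "'a \<Rightarrow> real"
  assumes X: "random_variable borel X" "integrable M (\<lambda>x. X x ^ 2)" and pos: "0 < expectation X"
  shows "prob {x\<in>space M. X x = 0} \<le> variance X / (expectation X)\<^sup>2"
proof -
  have "prob {x\<in>space M. X x = 0} \<le> prob {x\<in>space M. \<bar>X x - expectation X\<bar> \<ge> expectation X}"
    using X(1) by (intro finite_measure_mono) auto
  also have "\<dots> \<le> variance X / (expectation X)\<^sup>2"
    using X pos by (intro Chebyshev_inequality) auto
  finally show ?thesis .
qed

definition num_uncovered :: "nat \<Rightarrow> nat \<Rightarrow> (nat \<Rightarrow> bool list set) \<Rightarrow> nat" where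
  "num_uncovered n m V = card (cube n - (\<Union>j<m. V j))"

lemma FLAT_iff_num_uncovered: "FLAT n m V \<longleftrightarrow> num_uncovered n m V \<noteq> 0"
  by (simp add: FLAT_def num_uncovered_def finite_cube)

lemma num_uncovered_eq_sum_prod:
  "real (num_uncovered n m V) = (\<Sum>x\<in>cube n. \<Prod>j<m. of_bool (x \<notin> V j))"
proof -
  have "cube n - (\<Union>j<m. V j) = cube n \<inter> {x. \<forall>j\<in>{..<m}. x \<notin> V j}"
    by auto
  then show ?thesis
    by (simp add: num_uncovered_def prod_of_bool finite_cube)
qed

lemma integrable_P_unif: "k \<le> n \<Longrightarrow> integrable (measure_pmf (P_unif n k m)) (f :: _ \<Rightarrow> real)"
  unfolding P_unif_def
  by (intro integrable_measure_pmf_finite)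
     (simp add: set_Pi_pmf finite_kflats kflats_nonempty finite_PiE_dflt)

lemma expectation_P_unif_prod:
  fixes f :: "bool list set \<Rightarrow> real"
  assumes "k \<le> n" "\<And>F. 0 \<le> f F"
  shows "measure_pmf.expectation (P_unif n k m) (\<lambda>V. \<Prod>j<m. f (V j))
       = measure_pmf.expectation (pmf_of_set (kflats n k)) f ^ m"
  unfolding P_unif_def using assms
  by (subst expectation_prod_Pi_pmf)
     (auto intro: integrable_measure_pmf_finite simp: finite_kflats kflats_nonempty)

lemma expectation_num_uncovered:
  assumes "k \<le> n"
  shows "measure_pmf.expectation (P_unif n k m) (\<lambda>V. real (num_uncovered n m V))
       = 2 ^ n * (1 - 1 / 2 ^ k) ^ m"
proof -
  have "measure_pmf.expectation (P_unif n k m) (\<lambda>V. real (num_uncovered n m V))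
      = (\<Sum>x\<in>cube n. measure_pmf.expectation (P_unif n k m) (\<lambda>V. \<Prod>j<m. of_bool (x \<notin> V j)))"
    unfolding num_uncovered_eq_sum_prod by (rule Bochner_Integration.integral_sum) (rule integrable_P_unif[OF assms])
  also have "\<dots> = (\<Sum>x\<in>cube n. (1 - 1 / 2 ^ k) ^ m)"
    using assms by (intro sum.cong refl) (subst expectation_P_unif_prod, auto simp: expectation_kflat_avoids)
  finally show ?thesis
    by (simp add: card_cube)
qed

lemma expectation_num_uncovered_sq_le:
  fixes n k m :: nat
  assumes "k \<le> n"
  defines "\<mu> \<equiv> 2 ^ n * (1 - 1 / 2 ^ k) ^ m"
  shows "measure_pmf.expectation (P_unif n k m) (\<lambda>V. real (num_uncovered n m V) ^ 2) \<le> \<mu> + \<mu>\<^sup>2"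
proof -
  define q :: real where "q = 1 - 1 / 2 ^ k"
  have q: "0 \<le> q"
    by (simp add: q_def)
  define E2 where "E2 x y = measure_pmf.expectation (pmf_of_set (kflats n k))
                              (\<lambda>F. of_bool (x \<notin> F) * of_bool (y \<notin> F) :: real)" for x y
  have E2_le: "E2 x y ^ m \<le> of_bool (x = y) * q ^ m + (q\<^sup>2) ^ m" if "x \<in> cube n" "y \<in> cube n" for x y
  proof (cases "x = y")
    case True
    then show ?thesis
      using that assms by (simp add: E2_def expectation_kflat_avoids q_def flip: of_bool_conj)
  next
    case False
    have "0 \<le> E2 x y"
      unfolding E2_def by (intro Bochner_Integration.integral_nonneg) simp
    then show ?thesis
      using that False assms expectation_kflat_avoids_both_le[of k n x y]
      by (simp add: E2_def q_def power_mono)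
  qed
  have "(\<lambda>V. real (num_uncovered n m V) ^ 2)
      = (\<lambda>V. \<Sum>x\<in>cube n. \<Sum>y\<in>cube n. \<Prod>j<m. of_bool (x \<notin> V j) * of_bool (y \<notin> V j))"
    unfolding num_uncovered_eq_sum_prod power2_eq_square sum_product prod.distrib ..
  moreover have "measure_pmf.expectation (P_unif n k m) (\<lambda>V. \<Prod>j<m. of_bool (x \<notin> V j) * of_bool (y \<notin> V j))
      = E2 x y ^ m" for x y
    unfolding E2_def using assms by (subst expectation_P_unif_prod) auto
  ultimately have "measure_pmf.expectation (P_unif n k m) (\<lambda>V. real (num_uncovered n m V) ^ 2)
      = (\<Sum>x\<in>cube n. \<Sum>y\<in>cube n. E2 x y ^ m)"
    using assms by (simp add: Bochner_Integration.integral_sum integrable_P_unif)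
  also have "\<dots> \<le> (\<Sum>x\<in>cube n. \<Sum>y\<in>cube n. of_bool (x = y) * q ^ m + (q\<^sup>2) ^ m)"
    by (intro sum_mono E2_le)
  also have "\<dots> = \<mu> + \<mu>\<^sup>2"
    unfolding \<mu>_def q_def[symmetric]
    by (simp add: sum.distrib card_cube finite_cube power2_eq_square power_mult_distrib algebra_simps)
  finally show ?thesis .
qed

lemma prob_FLAT_le:
  assumes "k \<le> n"
  shows "measure_pmf.prob (P_unif n k m) {V. FLAT n m V} \<le> 2 ^ n * (1 - 1 / 2 ^ k) ^ m"
proof -
  have "measure_pmf.prob (P_unif n k m) {V. FLAT n m V}
      = measure_pmf.expectation (P_unif n k m) (indicator {V. FLAT n m V})"
    by simp
  also have "\<dots> \<le> measure_pmf.expectation (P_unif n k m) (\<lambda>V. real (num_uncovered n m V))"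
    by (intro integral_mono integrable_P_unif[OF assms]) (auto simp: FLAT_iff_num_uncovered indicator_def)
  finally show ?thesis
    using assms by (simp add: expectation_num_uncovered)
qed

lemma prob_FLAT_ge:
  fixes n k m :: nat
  assumes "1 \<le> k" "k \<le> n"
  defines "\<mu> \<equiv> 2 ^ n * (1 - 1 / 2 ^ k) ^ m"
  shows "1 - 1 / \<mu> \<le> measure_pmf.prob (P_unif n k m) {V. FLAT n m V}"
proof -
  let ?P = "P_unif n k m" and ?Z = "\<lambda>V. real (num_uncovered n m V)"
  have "(1::real) < 2 ^ k"
    using assms(1) by (simp add: one_less_power)
  then have \<mu>_pos: "0 < \<mu>"
    by (simp add: \<mu>_def)
  have "measure_pmf.prob ?P {V. ?Z V = 0} \<le> measure_pmf.variance ?P ?Z / \<mu>\<^sup>2"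
    using measure_pmf.prob_eq_0_le_variance[of ?Z ?P] \<mu>_pos assms(2)
    by (simp add: integrable_P_unif expectation_num_uncovered \<mu>_def)
  also have "\<dots> \<le> \<mu> / \<mu>\<^sup>2"
  proof (rule divide_right_mono)
    show "measure_pmf.variance ?P ?Z \<le> \<mu>"
      using expectation_num_uncovered_sq_le[OF assms(2), of m] assms(2)
      by (subst measure_pmf.variance_eq)
         (simp_all add: integrable_P_unif expectation_num_uncovered \<mu>_def)
  qed simp
  also have "\<dots> = 1 / \<mu>"
    by (simp add: power2_eq_square)
  finally have "measure_pmf.prob ?P {V. ?Z V = 0} \<le> 1 / \<mu>" .
  moreover have "measure_pmf.prob ?P {V. FLAT n m V} = 1 - measure_pmf.prob ?P {V. ?Z V = 0}"
    using measure_pmf.prob_compl[of "{V. ?Z V = 0}" ?P]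
    by (simp add: FLAT_iff_num_uncovered Compl_eq_Diff_UNIV[symmetric] Collect_neg_eq[symmetric])
  ultimately show ?thesis
    by simp
qed

section \<open>Asymptotics\<close>

lemma two_pow_mult_pow_floor_bounds:
  fixes q \<Delta> :: real
  assumes q: "0 < q" "q < 1" and "0 < \<Delta>"
  defines "c \<equiv> ln 2 + \<Delta> * ln q"
  shows "exp (real n * c) \<le> 2 ^ n * q ^ nat \<lfloor>\<Delta> * real n\<rfloor>"
    and "2 ^ n * q ^ nat \<lfloor>\<Delta> * real n\<rfloor> \<le> exp (real n * c) / q"
proof -
  define m where "m = real (nat \<lfloor>\<Delta> * real n\<rfloor>)"
  have m: "\<Delta> * real n - 1 \<le> m" "m \<le> \<Delta> * real n"
    using \<open>0 < \<Delta>\<close> by (auto simp: m_def of_nat_nat)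
  have "ln q < 0"
    using q by simp
  have pow: "2 ^ n * q ^ nat \<lfloor>\<Delta> * real n\<rfloor> = exp (real n * ln 2 + m * ln q)"
    using q by (simp add: m_def exp_add exp_of_nat_mult)
  have "(\<Delta> * real n) * ln q \<le> m * ln q"
    using m(2) \<open>ln q < 0\<close> by (intro mult_right_mono_neg) auto
  then show "exp (real n * c) \<le> 2 ^ n * q ^ nat \<lfloor>\<Delta> * real n\<rfloor>"
    unfolding pow c_def by (simp add: algebra_simps)
  have "(\<Delta> * real n) * ln q \<ge> (m + 1) * ln q"
    using m(1) \<open>ln q < 0\<close> by (intro mult_right_mono_neg) auto
  then have "exp (real n * ln 2 + m * ln q) \<le> exp (real n * c - ln q)"
    unfolding c_def by (simp add: algebra_simps)
  then show "2 ^ n * q ^ nat \<lfloor>\<Delta> * real n\<rfloor> \<le> exp (real n * c) / q"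
    unfolding pow using q by (simp add: exp_diff)
qed

lemma prob_FLAT_tendsto_0:
  fixes \<Delta> :: real
  assumes "1 \<le> k" "0 < \<Delta>" "ln 2 + \<Delta> * ln (1 - 1 / 2 ^ k) < 0"
  shows "(\<lambda>n. measure_pmf.prob (P_unif n k (nat \<lfloor>\<Delta> * real n\<rfloor>))
                {V. FLAT n (nat \<lfloor>\<Delta> * real n\<rfloor>) V}) \<longlonglongrightarrow> 0"
proof (rule tendsto_sandwich[where f = "\<lambda>_. 0"])
  define q :: real where "q = 1 - 1 / 2 ^ k"
  define c where "c = ln 2 + \<Delta> * ln q"
  have q: "0 < q" "q < 1"
    using assms(1) by (auto simp: q_def one_less_power)
  show "eventually (\<lambda>n. measure_pmf.prob (P_unif n k (nat \<lfloor>\<Delta> * real n\<rfloor>))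
                {V. FLAT n (nat \<lfloor>\<Delta> * real n\<rfloor>) V} \<le> exp (real n * c) / q) sequentially"
    using eventually_ge_at_top[of k]
  proof eventually_elim
    case (elim n)
    then show ?case
      using prob_FLAT_le[OF elim, of "nat \<lfloor>\<Delta> * real n\<rfloor>", folded q_def]
        two_pow_mult_pow_floor_bounds(2)[OF q assms(2), of n, folded c_def]
      by linarith
  qed
  have "c < 0"
    using assms(3) by (simp add: c_def q_def)
  then have "(\<lambda>n. exp c ^ n / q) \<longlonglongrightarrow> 0"
    by (intro tendsto_divide_zero LIMSEQ_realpow_zero) auto
  then show "(\<lambda>n. exp (real n * c) / q) \<longlonglongrightarrow> 0"
    by (simp add: exp_of_nat_mult)
qed auto

lemma prob_FLAT_tendsto_1:
  fixes \<Delta> :: real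
  assumes "1 \<le> k" "0 < \<Delta>" "0 < ln 2 + \<Delta> * ln (1 - 1 / 2 ^ k)"
  shows "(\<lambda>n. measure_pmf.prob (P_unif n k (nat \<lfloor>\<Delta> * real n\<rfloor>))
                {V. FLAT n (nat \<lfloor>\<Delta> * real n\<rfloor>) V}) \<longlonglongrightarrow> 1"
proof (rule tendsto_sandwich[where h = "\<lambda>_. 1"])
  define q :: real where "q = 1 - 1 / 2 ^ k"
  define c where "c = ln 2 + \<Delta> * ln q"
  have q: "0 < q" "q < 1"
    using assms(1) by (auto simp: q_def one_less_power)
  show "eventually (\<lambda>n. 1 - exp (- c) ^ n \<le> measure_pmf.prob (P_unif n k (nat \<lfloor>\<Delta> * real n\<rfloor>))
                {V. FLAT n (nat \<lfloor>\<Delta> * real n\<rfloor>) V}) sequentially"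
    using eventually_ge_at_top[of k]
  proof eventually_elim
    case (elim n)
    have "exp (real n * c) \<le> 2 ^ n * q ^ nat \<lfloor>\<Delta> * real n\<rfloor>"
      using two_pow_mult_pow_floor_bounds(1)[OF q assms(2)] by (simp add: c_def)
    then have "1 / (2 ^ n * q ^ nat \<lfloor>\<Delta> * real n\<rfloor>) \<le> 1 / exp (real n * c)"
      by (intro frac_le) simp_all
    also have "\<dots> = exp (- c) ^ n"
      by (simp add: exp_minus exp_of_nat_mult power_inverse divide_inverse)
    finally have "1 / (2 ^ n * q ^ nat \<lfloor>\<Delta> * real n\<rfloor>) \<le> exp (- c) ^ n" .
    then show ?case
      using prob_FLAT_ge[OF assms(1) elim, of "nat \<lfloor>\<Delta> * real n\<rfloor>", folded q_def] by linarith
  qed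
  have "0 < c"
    using assms(3) by (simp add: c_def q_def)
  then have "(\<lambda>n. 1 - exp (- c) ^ n) \<longlonglongrightarrow> 1 - 0"
    by (intro tendsto_diff tendsto_const LIMSEQ_realpow_zero) auto
  then show "(\<lambda>n. 1 - exp (- c) ^ n) \<longlonglongrightarrow> 1"
    by simp
qed auto

lemma Delta_k_mult_ln:
  assumes "1 \<le> k"
  shows "Delta_k k * ln (1 - 1 / 2 ^ k) = - ln 2"
proof -
  have "2 powr (- real k) = 1 / (2::real) ^ k"
    by (simp add: powr_minus powr_realpow divide_inverse)
  moreover have "ln (1 - 1 / 2 ^ k) \<noteq> (0::real)"
    using assms by (simp add: one_less_power)
  ultimately show ?thesis
    by (simp add: Delta_k_def ln_div)
qed

lemma less_Delta_k_iff:
  assumes "1 \<le> k"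
  shows "\<Delta> < Delta_k k \<longleftrightarrow> 0 < ln 2 + \<Delta> * ln (1 - 1 / 2 ^ k)"
proof -
  have "ln (1 - 1 / 2 ^ k) < (0::real)"
    using assms by (simp add: one_less_power)
  then have "\<Delta> < Delta_k k \<longleftrightarrow> Delta_k k * ln (1 - 1 / 2 ^ k) < \<Delta> * ln (1 - 1 / 2 ^ k)"
    by (simp add: mult_less_cancel_right)
  then show ?thesis
    by (simp add: Delta_k_mult_ln[OF assms]) arith
qed

lemma Delta_k_less_iff:
  assumes "1 \<le> k"
  shows "Delta_k k < \<Delta> \<longleftrightarrow> ln 2 + \<Delta> * ln (1 - 1 / 2 ^ k) < 0"
proof -
  have "ln (1 - 1 / 2 ^ k) < (0::real)"
    using assms by (simp add: one_less_power)
  then have "Delta_k k < \<Delta> \<longleftrightarrow> \<Delta> * ln (1 - 1 / 2 ^ k) < Delta_k k * ln (1 - 1 / 2 ^ k)"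
    by (simp add: mult_less_cancel_right)
  then show ?thesis
    by (simp add: Delta_k_mult_ln[OF assms]) arith
qed

theorem mainTheorem3:
  fixes k :: nat and \<Delta> :: real
  assumes "k \<ge> 1" and "\<Delta> > 0"
  shows "(\<Delta> < Delta_k k \<longrightarrow>
           (\<lambda>n. measure_pmf.prob (P_unif n k (nat \<lfloor>\<Delta> * real n\<rfloor>))
                   {V. FLAT n (nat \<lfloor>\<Delta> * real n\<rfloor>) V}) \<longlonglongrightarrow> 1)
       \<and> (\<Delta> > Delta_k k \<longrightarrow>
           (\<lambda>n. measure_pmf.prob (P_unif n k (nat \<lfloor>\<Delta> * real n\<rfloor>))
                   {V. FLAT n (nat \<lfloor>\<Delta> * real n\<rfloor>) V}) \<longlonglongrightarrow> 0)"
proof (intro conjI impI)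
  assume "\<Delta> < Delta_k k"
  then show "(\<lambda>n. measure_pmf.prob (P_unif n k (nat \<lfloor>\<Delta> * real n\<rfloor>))
               {V. FLAT n (nat \<lfloor>\<Delta> * real n\<rfloor>) V}) \<longlonglongrightarrow> 1"
    using assms by (intro prob_FLAT_tendsto_1) (simp_all add: less_Delta_k_iff)
next
  assume "\<Delta> > Delta_k k"
  then show "(\<lambda>n. measure_pmf.prob (P_unif n k (nat \<lfloor>\<Delta> * real n\<rfloor>))
               {V. FLAT n (nat \<lfloor>\<Delta> * real n\<rfloor>) V}) \<longlonglongrightarrow> 0"
    using assms by (intro prob_FLAT_tendsto_0) (simp_all add: Delta_k_less_iff)
qed

end
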